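(* Let $ABC$ be a nondegenerate triangle and let $P$ be its incenter or one of its excenters. If $XYZ$ is a Miquel triangle of $P$ relative to $ABC$, then $P$ is the circumcenter of $XYZ$.
   Context: Miquel triangle: given a triangle $ABC$ and a point $P$ not on the lines $BC,CA,AB$, a triangle $XYZ$ with $X$ on line $BC$, $Y$ on line $CA$, $Z$ on line $AB$ is called a Miquel triangle of $P$ relative to $ABC$ if $P$ lies on each of the three circles through $A,Y,Z$, through $B,Z,X$, and through $C,X,Y$. *)

theory Defs
  imports "HOL-Analysis.Analysis"
begin

definition on_line :: "complex \<Rightarrow> complex \<Rightarrow> complex \<Rightarrow> bool" where
  "on_line P U V \<longleftrightarrow> P \<in> affine hull {U, V}"

definition on_circle_through :: "complex \<Rightarrow> complex \<Rightarrow> complex \<Rightarrow> complex \<Rightarrow> bool" where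
  "on_circle_through P U V W \<longleftrightarrow>
     \<not> collinear {U, V, W} \<and>
     (\<exists>Q. dist Q U = dist Q V \<and> dist Q U = dist Q W \<and> dist Q U = dist Q P)"

(* incenter and the three excenters (barycentric formulas, a,b,c the side lengths) *)
definition incenter :: "complex \<Rightarrow> complex \<Rightarrow> complex \<Rightarrow> complex" where
  "incenter A B C =
     (let a = dist B C; b = dist C A; c = dist A B
      in (1 / (a + b + c)) *\<^sub>R (a *\<^sub>R A + b *\<^sub>R B + c *\<^sub>R C))"

definition excenter_A :: "complex \<Rightarrow> complex \<Rightarrow> complex \<Rightarrow> complex" where
  "excenter_A A B C =
     (let a = dist B C; b = dist C A; c = dist A B
      in (1 / (- a + b + c)) *\<^sub>R ((- a) *\<^sub>R A + b *\<^sub>R B + c *\<^sub>R C))"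

definition excenter_B :: "complex \<Rightarrow> complex \<Rightarrow> complex \<Rightarrow> complex" where
  "excenter_B A B C =
     (let a = dist B C; b = dist C A; c = dist A B
      in (1 / (a - b + c)) *\<^sub>R (a *\<^sub>R A + (- b) *\<^sub>R B + c *\<^sub>R C))"

definition excenter_C :: "complex \<Rightarrow> complex \<Rightarrow> complex \<Rightarrow> complex" where
  "excenter_C A B C =
     (let a = dist B C; b = dist C A; c = dist A B
      in (1 / (a + b - c)) *\<^sub>R (a *\<^sub>R A + b *\<^sub>R B + (- c) *\<^sub>R C))"

definition miquel_triangle ::
  "complex \<Rightarrow> complex \<Rightarrow> complex \<Rightarrow> complex \<Rightarrow> complex \<Rightarrow> complex \<Rightarrow> complex \<Rightarrow> bool" where
  "miquel_triangle A B C P X Y Z \<longleftrightarrow>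
     \<not> on_line P B C \<and> \<not> on_line P C A \<and> \<not> on_line P A B \<and>
     \<not> collinear {X, Y, Z} \<and>
     on_line X B C \<and> on_line Y C A \<and> on_line Z A B \<and>
     on_circle_through P A Y Z \<and> on_circle_through P B Z X \<and> on_circle_through P C X Y"

definition is_circumcenter :: "complex \<Rightarrow> complex \<Rightarrow> complex \<Rightarrow> complex \<Rightarrow> bool" where
  "is_circumcenter Q X Y Z \<longleftrightarrow> \<not> collinear {X, Y, Z} \<and> dist Q X = dist Q Y \<and> dist Q Y = dist Q Z"

end

theory Submission
  imports Defs
begin

(* At the vertex A the incenter and the excenters lie on one of the two bisectors of the lines AB
   and AC.  On a circle through A and P, two lines through A that are mirror images in AP cut off
   chords PY and PZ of equal length (equal inscribed angles).  So PY = PZ, and at B likewise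
   PZ = PX. *)

(* the internal and the external bisector at A of the lines AU and AV *)
definition on_bisector :: "'a::real_normed_vector \<Rightarrow> 'a \<Rightarrow> 'a \<Rightarrow> 'a \<Rightarrow> bool" where
  "on_bisector A U V P \<longleftrightarrow>
     (\<exists>k \<sigma> \<tau>. \<bar>\<sigma>\<bar> = 1 \<and> \<bar>\<tau>\<bar> = 1 \<and> P - A = k *\<^sub>R (\<sigma> *\<^sub>R sgn (U - A) + \<tau> *\<^sub>R sgn (V - A)))"

lemma on_bisectorI:
  fixes A U V :: "'a::real_normed_vector"
  assumes "\<bar>\<sigma>\<bar> = 1" "\<bar>\<tau>\<bar> = 1"
  shows "on_bisector A U V
           (A + t *\<^sub>R ((\<sigma> * norm (V - A)) *\<^sub>R (U - A) + (\<tau> * norm (U - A)) *\<^sub>R (V - A)))"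
proof -
  have "(\<sigma> * norm (V - A)) *\<^sub>R (U - A) + (\<tau> * norm (U - A)) *\<^sub>R (V - A) =
        (norm (U - A) * norm (V - A)) *\<^sub>R (\<sigma> *\<^sub>R sgn (U - A) + \<tau> *\<^sub>R sgn (V - A))"
    by (cases "U = A"; cases "V = A") (simp_all add: sgn_div_norm scaleR_add_right field_simps)
  then show ?thesis
    unfolding on_bisector_def using assms
    by (intro exI[of _ "t * (norm (U - A) * norm (V - A))"] exI[of _ \<sigma>] exI[of _ \<tau>]) simp
qed

lemma dist_eq_iff_norm_power2_eq_inner:
  fixes Q A W :: "'a::real_inner"
  shows "dist Q W = dist Q A \<longleftrightarrow> (norm (W - A))\<^sup>2 = 2 * inner (W - A) (Q - A)"
proof -
  have "dist Q W = dist Q A \<longleftrightarrow> (norm ((W - A) - (Q - A)))\<^sup>2 = (norm (Q - A))\<^sup>2"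
    by (simp add: dist_norm norm_minus_commute)
  also have "\<dots> \<longleftrightarrow> (norm (W - A))\<^sup>2 = 2 * inner (W - A) (Q - A)"
    unfolding power2_norm_eq_inner by (simp add: inner_diff_right inner_commute algebra_simps)
  finally show ?thesis .
qed

lemma concyclic_bisector_chords_eq:
  fixes A Q e\<^sub>1 e\<^sub>2 :: "'a::real_inner"
  assumes unit: "norm e\<^sub>1 = 1" "norm e\<^sub>2 = 1" and nz: "s\<^sub>1 \<noteq> 0" "s\<^sub>2 \<noteq> 0" "k \<noteq> 0"
    and on_circle: "dist Q (A + s\<^sub>1 *\<^sub>R e\<^sub>1) = dist Q A" "dist Q (A + s\<^sub>2 *\<^sub>R e\<^sub>2) = dist Q A"
      "dist Q (A + k *\<^sub>R (e\<^sub>1 + e\<^sub>2)) = dist Q A"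
  shows "dist (A + k *\<^sub>R (e\<^sub>1 + e\<^sub>2)) (A + s\<^sub>1 *\<^sub>R e\<^sub>1) = dist (A + k *\<^sub>R (e\<^sub>1 + e\<^sub>2)) (A + s\<^sub>2 *\<^sub>R e\<^sub>2)"
proof -
  (* A chord from A in a unit direction e has signed length 2 <e, Q - A>,
     so s1 + s2 = 2 k (1 + <e1, e2>). *)
  define c where "c = inner e\<^sub>1 e\<^sub>2"
  define m where "m = Q - A"
  have e: "inner e\<^sub>1 e\<^sub>1 = 1" "inner e\<^sub>2 e\<^sub>2 = 1" "inner e\<^sub>1 e\<^sub>2 = c" "inner e\<^sub>2 e\<^sub>1 = c"
    using unit by (simp_all add: norm_eq_1 c_def inner_commute)
  have "s\<^sub>1 * s\<^sub>1 = s\<^sub>1 * (2 * inner e\<^sub>1 m)"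
    using on_circle(1) unit by (simp add: dist_eq_iff_norm_power2_eq_inner m_def power2_eq_square)
  then have s\<^sub>1: "s\<^sub>1 = 2 * inner e\<^sub>1 m" using nz(1) by simp
  have "s\<^sub>2 * s\<^sub>2 = s\<^sub>2 * (2 * inner e\<^sub>2 m)"
    using on_circle(2) unit by (simp add: dist_eq_iff_norm_power2_eq_inner m_def power2_eq_square)
  then have s\<^sub>2: "s\<^sub>2 = 2 * inner e\<^sub>2 m" using nz(2) by simp
  have "k * (k * (2 + 2 * c)) = k * (s\<^sub>1 + s\<^sub>2)"
    using on_circle(3) e unfolding s\<^sub>1 s\<^sub>2
    by (simp add: dist_eq_iff_norm_power2_eq_inner power2_norm_eq_inner m_def
        inner_add_left inner_add_right algebra_simps)
  then have k: "k * (2 + 2 * c) = s\<^sub>1 + s\<^sub>2" using nz(3) by simp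
  have "(dist (A + k *\<^sub>R (e\<^sub>1 + e\<^sub>2)) (A + s\<^sub>1 *\<^sub>R e\<^sub>1))\<^sup>2 =
        k * k * (2 + 2 * c) - 2 * k * s\<^sub>1 * (1 + c) + s\<^sub>1 * s\<^sub>1"
    using e by (simp add: dist_norm power2_norm_eq_inner inner_add_left inner_add_right
        inner_diff_left inner_diff_right algebra_simps)
  also have "\<dots> = k * k * (2 + 2 * c) - 2 * k * s\<^sub>2 * (1 + c) + s\<^sub>2 * s\<^sub>2"
    using k by algebra
  also have "\<dots> = (dist (A + k *\<^sub>R (e\<^sub>1 + e\<^sub>2)) (A + s\<^sub>2 *\<^sub>R e\<^sub>2))\<^sup>2"
    using e by (simp add: dist_norm power2_norm_eq_inner inner_add_left inner_add_right
        inner_diff_left inner_diff_right algebra_simps)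
  finally show ?thesis by (simp add: power2_eq_iff_nonneg)
qed

lemma affine_hull_2_signed_sgn:
  fixes A U Y :: "'a::real_normed_vector"
  assumes "Y \<in> affine hull {A, U}" "\<bar>\<sigma>\<bar> = 1"
  obtains s where "Y = A + s *\<^sub>R (\<sigma> *\<^sub>R sgn (U - A))"
proof -
  obtain u where Y: "Y = A + u *\<^sub>R (U - A)"
    using assms(1) by (auto simp: affine_hull_2_alt)
  have "\<sigma> * \<sigma> = 1" using assms(2) abs_mult_self_eq[of \<sigma>] by simp
  then have "(\<sigma> * u * norm (U - A)) *\<^sub>R (\<sigma> *\<^sub>R sgn (U - A)) =
             u *\<^sub>R (norm (U - A) *\<^sub>R sgn (U - A))"
    by (metis (no_types, lifting) mult.commute mult.left_commute mult_1 scaleR_scaleR)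
  also have "\<dots> = u *\<^sub>R (U - A)"
    by (cases "U = A") (simp_all add: sgn_div_norm)
  finally have "Y = A + (\<sigma> * u * norm (U - A)) *\<^sub>R (\<sigma> *\<^sub>R sgn (U - A))"
    using Y by simp
  then show thesis by (rule that)
qed

lemma concyclic_on_bisector_dist_eq:
  fixes A U V P Y Z Q :: "'a::real_inner"
  assumes "on_bisector A U V P" "P \<noteq> A"
    and "Y \<in> affine hull {A, U}" "Y \<noteq> A" "Z \<in> affine hull {A, V}" "Z \<noteq> A"
    and "dist Q Y = dist Q A" "dist Q Z = dist Q A" "dist Q P = dist Q A"
  shows "dist P Y = dist P Z"
proof -
  obtain k \<sigma> \<tau> where \<sigma>: "\<bar>\<sigma>\<bar> = 1" and \<tau>: "\<bar>\<tau>\<bar> = 1"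
    and "P - A = k *\<^sub>R (\<sigma> *\<^sub>R sgn (U - A) + \<tau> *\<^sub>R sgn (V - A))"
    using assms(1) unfolding on_bisector_def by blast
  then have P: "P = A + k *\<^sub>R (\<sigma> *\<^sub>R sgn (U - A) + \<tau> *\<^sub>R sgn (V - A))"
    by (metis add.commute diff_add_cancel)
  obtain s\<^sub>1 where Y: "Y = A + s\<^sub>1 *\<^sub>R (\<sigma> *\<^sub>R sgn (U - A))"
    using affine_hull_2_signed_sgn[OF assms(3) \<sigma>] .
  obtain s\<^sub>2 where Z: "Z = A + s\<^sub>2 *\<^sub>R (\<tau> *\<^sub>R sgn (V - A))"
    using affine_hull_2_signed_sgn[OF assms(5) \<tau>] .
  have "U \<noteq> A" "V \<noteq> A" "s\<^sub>1 \<noteq> 0" "s\<^sub>2 \<noteq> 0" "k \<noteq> 0"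
    using Y Z P assms(2,4,6) by auto
  with \<sigma> \<tau> show ?thesis
    using assms(7-9) unfolding P Y Z
    by (intro concyclic_bisector_chords_eq) (simp_all add: norm_sgn)
qed

lemma dist_less_add_if_not_collinear:
  fixes A B C :: "'a::euclidean_space"
  assumes "\<not> collinear {A, B, C}"
  shows "dist B C < dist B A + dist A C"
proof -
  have "dist B C \<noteq> dist B A + dist A C"
    using assms between[of B C A] between_imp_collinear[of B C A] by (auto simp: insert_commute)
  then show ?thesis using dist_triangle[of B C A] by linarith
qed

lemma barycentric_eq_vertex_plus:
  fixes A B C :: "'a::real_vector"
  assumes "a + b + c \<noteq> 0"
  shows "(1 / (a + b + c)) *\<^sub>R (a *\<^sub>R A + b *\<^sub>R B + c *\<^sub>R C) =
         A + (1 / (a + b + c)) *\<^sub>R (b *\<^sub>R (B - A) + c *\<^sub>R (C - A))"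
proof -
  have "A = (1 / (a + b + c)) *\<^sub>R ((a + b + c) *\<^sub>R A)" using assms by simp
  also have "\<dots> + (1 / (a + b + c)) *\<^sub>R (b *\<^sub>R (B - A) + c *\<^sub>R (C - A)) =
             (1 / (a + b + c)) *\<^sub>R (a *\<^sub>R A + b *\<^sub>R B + c *\<^sub>R C)"
    by (simp only: scaleR_add_right[symmetric]) (simp add: algebra_simps)
  finally show ?thesis by simp
qed

definition tritangent_centers :: "complex \<Rightarrow> complex \<Rightarrow> complex \<Rightarrow> complex set" where
  "tritangent_centers A B C = {incenter A B C, excenter_A A B C, excenter_B A B C, excenter_C A B C}"

lemma tritangent_centers_rotate: "tritangent_centers B C A = tritangent_centers A B C"
proof -
  have "incenter B C A = incenter A B C"
    by (simp add: incenter_def Let_def dist_commute algebra_simps)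
  moreover have "excenter_A B C A = excenter_B A B C"
    by (simp add: excenter_A_def excenter_B_def Let_def dist_commute algebra_simps)
  moreover have "excenter_B B C A = excenter_C A B C"
    by (simp add: excenter_B_def excenter_C_def Let_def dist_commute algebra_simps)
  moreover have "excenter_C B C A = excenter_A A B C"
    by (simp add: excenter_C_def excenter_A_def Let_def dist_commute algebra_simps)
  ultimately show ?thesis by (auto simp: tritangent_centers_def)
qed

lemma tritangent_center_on_bisector:
  assumes "\<not> collinear {A, B, C}" "P \<in> tritangent_centers A B C"
  shows "on_bisector A B C P"
proof -
  define a b c where "a = dist B C" and "b = dist C A" and "c = dist A B"
  have bary_on_bisector:
    "on_bisector A B C ((1 / (a' + \<sigma> * b + \<tau> * c)) *\<^sub>R (a' *\<^sub>R A + (\<sigma> * b) *\<^sub>R B + (\<tau> * c) *\<^sub>R C))"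
    if "\<bar>\<sigma>\<bar> = 1" "\<bar>\<tau>\<bar> = 1" "a' + \<sigma> * b + \<tau> * c \<noteq> 0" for a' \<sigma> \<tau>
  proof -
    have "b = norm (C - A)" "c = norm (B - A)"
      by (simp_all add: b_def c_def dist_norm norm_minus_commute)
    then show ?thesis
      using on_bisectorI[OF that(1,2), of A B C] that(3) by (simp add: barycentric_eq_vertex_plus)
  qed
  have "a < b + c" "b < c + a" "c < a + b"
    using dist_less_add_if_not_collinear[of A B C] dist_less_add_if_not_collinear[of B C A]
      dist_less_add_if_not_collinear[of C A B] assms(1)
    by (simp_all add: a_def b_def c_def dist_commute insert_commute)
  moreover have "a \<ge> 0" "b \<ge> 0" "c \<ge> 0" by (simp_all add: a_def b_def c_def)
  ultimately show ?thesis
    using assms(2) bary_on_bisector[of 1 1 a] bary_on_bisector[of 1 1 "- a"]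
      bary_on_bisector[of "- 1" 1 a] bary_on_bisector[of 1 "- 1" a]
    unfolding tritangent_centers_def incenter_def excenter_A_def excenter_B_def excenter_C_def Let_def
      a_def[symmetric] b_def[symmetric] c_def[symmetric]
    by auto
qed

lemma miquel_circle_chords_eq:
  assumes "\<not> collinear {A, B, C}" "P \<in> tritangent_centers A B C" "\<not> on_line P A B"
    and "on_line Y C A" "on_line Z A B" "on_circle_through P A Y Z"
  shows "dist P Y = dist P Z"
proof -
  obtain Q where Q: "dist Q A = dist Q Y" "dist Q A = dist Q Z" "dist Q A = dist Q P"
    and "\<not> collinear {A, Y, Z}"
    using assms(6) unfolding on_circle_through_def by blast
  then have "Y \<noteq> A" "Z \<noteq> A" by (auto simp: collinear_2 insert_commute)
  moreover have "P \<noteq> A" using assms(3) by (auto simp: on_line_def hull_inc)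
  moreover have "Y \<in> affine hull {A, C}" "Z \<in> affine hull {A, B}"
    using assms(4,5) by (simp_all add: on_line_def insert_commute)
  ultimately have "dist P Z = dist P Y"
    using tritangent_center_on_bisector[OF assms(1,2)] Q
    by (intro concyclic_on_bisector_dist_eq[of A B C P Z Y Q]) simp_all
  then show ?thesis by simp
qed

theorem theorem7:
  fixes A B C P X Y Z :: complex
  assumes "\<not> collinear {A, B, C}"
    and "P \<in> {incenter A B C, excenter_A A B C, excenter_B A B C, excenter_C A B C}"
    and "miquel_triangle A B C P X Y Z"
  shows "is_circumcenter P X Y Z"
proof -
  note miquel = assms(3)[unfolded miquel_triangle_def]
  have P: "P \<in> tritangent_centers A B C"
    using assms(2) by (simp add: tritangent_centers_def)
  have "dist P Y = dist P Z"
    using assms(1) P miquel by (intro miquel_circle_chords_eq) auto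
  moreover have "dist P Z = dist P X"
  proof (rule miquel_circle_chords_eq)
    show "\<not> collinear {B, C, A}" using assms(1) by (simp add: insert_commute)
    show "P \<in> tritangent_centers B C A" using P by (simp add: tritangent_centers_rotate)
  qed (use miquel in simp_all)
  ultimately show ?thesis
    using miquel by (simp add: is_circumcenter_def)
qed

end
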